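(* Let $\Lambda$ be a torsion-free group generated by elements $f,g,h$ with $[f,h]\ne1$ and $[f,g]=1$, and let $G=\langle g,h\rangle\le\Lambda$. Suppose $G$ is non-trivial, $g\ne1$, $h\ne1$, and that if $G$ is cyclic then $g=h^n$ for some $n\in\mathbb{Z}$ with $|n|>1$. Then there exists a finitely generated torsion-free group $\Gamma$ such that: (1) $G$ embeds as a subgroup of $\Gamma$ (we identify $g,h$ with their images); (2) there exist distinct elements $a,b\in\Gamma\setminus\{1\}$ centralizing $g$; (3) the commutator $[a,[b,h]]$ is non-trivial and centralizes $g$.
   Context: $[x,y]$ denotes the group commutator. *)

theory Defs
  imports "HOL-Algebra.Algebra"
begin

definition comm :: "('a, 'b) monoid_scheme \<Rightarrow> 'a \<Rightarrow> 'a \<Rightarrow> 'a" where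
  "comm G x y = inv\<^bsub>G\<^esub> x \<otimes>\<^bsub>G\<^esub> inv\<^bsub>G\<^esub> y \<otimes>\<^bsub>G\<^esub> x \<otimes>\<^bsub>G\<^esub> y"

definition torsion_free :: "('a, 'b) monoid_scheme \<Rightarrow> bool" where
  "torsion_free G \<longleftrightarrow>
     (\<forall>x\<in>carrier G. x \<noteq> \<one>\<^bsub>G\<^esub> \<longrightarrow> (\<forall>n::nat. n > 0 \<longrightarrow> x [^]\<^bsub>G\<^esub> n \<noteq> \<one>\<^bsub>G\<^esub>))"

definition fin_gen :: "('a, 'b) monoid_scheme \<Rightarrow> bool" where
  "fin_gen G \<longleftrightarrow> (\<exists>S. finite S \<and> S \<subseteq> carrier G \<and> generate G S = carrier G)"

definition is_cyclic :: "('a, 'b) monoid_scheme \<Rightarrow> bool" where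
  "is_cyclic G \<longleftrightarrow> (\<exists>x\<in>carrier G. generate G {x} = carrier G)"

end

theory Submission
  imports Defs "HOL-Library.Countable_Set"
begin

(* Put H = <g>. Let W1 be the unrestricted wreath product of Z by L acting on its subsets by left
   translation, and W2 that of Z by W1 acting on itself. Take for b the indicator of the point H
   in the base of W1, and for a the base element of W2 reading off the coordinate at H. Since g
   fixes H, both commute with g. Since h moves H, [b,h] is a base element of W1 with value -1 at
   H, hence [a,[b,h]] is the constant function -1 in the base of W2, which commutes with all of
   W1, in particular with g. Such wreath products of torsion-free groups are torsion-free, so the
   subgroup generated by g, h, a, b is finitely generated and torsion-free; being countable, it
   has a copy on nat. *)

section \<open>Commutators and centralizing pairs\<close>

lemma (in group) comm_closed [simp]:
  "x \<in> carrier G \<Longrightarrow> y \<in> carrier G \<Longrightarrow> comm G x y \<in> carrier G"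
  by (simp add: comm_def)

lemma (in group_hom) hom_comm:
  "x \<in> carrier G \<Longrightarrow> y \<in> carrier G \<Longrightarrow> h (comm G x y) = comm H (h x) (h y)"
  by (simp add: comm_def)

definition centralizing_pair :: "('a, 'b) monoid_scheme \<Rightarrow> 'a \<Rightarrow> 'a \<Rightarrow> 'a \<Rightarrow> 'a \<Rightarrow> bool" where
  "centralizing_pair G g h a b \<longleftrightarrow>
     a \<in> carrier G \<and> b \<in> carrier G \<and> a \<noteq> \<one>\<^bsub>G\<^esub> \<and> b \<noteq> \<one>\<^bsub>G\<^esub> \<and> a \<noteq> b
     \<and> a \<otimes>\<^bsub>G\<^esub> g = g \<otimes>\<^bsub>G\<^esub> a \<and> b \<otimes>\<^bsub>G\<^esub> g = g \<otimes>\<^bsub>G\<^esub> b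
     \<and> comm G a (comm G b h) \<noteq> \<one>\<^bsub>G\<^esub>
     \<and> comm G a (comm G b h) \<otimes>\<^bsub>G\<^esub> g = g \<otimes>\<^bsub>G\<^esub> comm G a (comm G b h)"

lemma (in group_hom) centralizing_pair_image_iff:
  assumes inj: "inj_on h (carrier G)"
    and in_carrier: "x \<in> carrier G" "y \<in> carrier G" "a \<in> carrier G" "b \<in> carrier G"
  shows "centralizing_pair H (h x) (h y) (h a) (h b) \<longleftrightarrow> centralizing_pair G x y a b"
proof -
  have eq_iff: "h u = h v \<longleftrightarrow> u = v" if "u \<in> carrier G" "v \<in> carrier G" for u v
    using inj that by (auto dest: inj_onD)
  have "comm H (h a) (comm H (h b) (h y)) = h (comm G a (comm G b y))"
    using in_carrier by (simp add: hom_comm)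
  then show ?thesis
    using in_carrier eq_iff by (simp add: centralizing_pair_def flip: hom_mult hom_one)
qed

section \<open>Torsion-free, finitely generated and countable groups\<close>

lemma (in group) torsion_free_int_pow_eq_one_iff:
  assumes "torsion_free G" "x \<in> carrier G" "x \<noteq> \<one>"
  shows "x [^] (i::int) = \<one> \<longleftrightarrow> i = 0"
proof -
  have "ord x = 0" using assms by (simp add: ord_eq_0 torsion_free_def)
  then show ?thesis using int_pow_eq_id[OF assms(2)] by simp
qed

lemma (in group) not_in_generate_power:
  assumes tf: "torsion_free G" and h: "h \<in> carrier G" "h \<noteq> \<one>" and n: "\<bar>n\<bar> > 1"
  shows "h \<notin> generate G {h [^] (n::int)}"
proof
  assume "h \<in> generate G {h [^] n}"
  then obtain k :: int where "h = (h [^] n) [^] k" using generate_pow h by auto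
  then have "h [^] (n * k - 1) = \<one>" using h by (simp add: int_pow_pow int_pow_diff)
  then have "n * k = 1" using tf h by (simp add: torsion_free_int_pow_eq_one_iff)
  then show False using n by (auto simp: zmult_eq_1_iff)
qed

lemma (in group) is_cyclic_generate_pair:
  assumes "g \<in> carrier G" "h \<in> generate G {g}"
  shows "is_cyclic (G\<lparr>carrier := generate G {g, h}\<rparr>)"
proof -
  have "generate G {g, h} = generate G {g}"
    using assms generate.incl[of g "{g}" G]
    by (intro equalityI generate_subgroup_incl generate_is_subgroup mono_generate) auto
  moreover have "subgroup (generate G {g}) G" using assms by (intro generate_is_subgroup) auto
  ultimately show ?thesis
    unfolding is_cyclic_def using generate.incl[of g "{g}" G]
    by (auto simp: generate_consistent)
qed

lemma torsion_free_iso: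
  assumes "group G" "group H" "e \<in> iso G H" "torsion_free G"
  shows "torsion_free H"
  unfolding torsion_free_def
proof (intro ballI impI allI)
  interpret e: group_hom G H e
    using assms by (simp add: group_hom_def group_hom_axioms_def iso_def)
  have bij: "bij_betw e (carrier G) (carrier H)" using assms(3) by (simp add: iso_def)
  fix u and n :: nat assume u: "u \<in> carrier H" "u \<noteq> \<one>\<^bsub>H\<^esub>" and "n > 0"
  obtain x where x: "x \<in> carrier G" "u = e x" using u bij by (auto simp: bij_betw_def)
  have "x \<noteq> \<one>\<^bsub>G\<^esub>" using x u by auto
  then have "x [^]\<^bsub>G\<^esub> n \<noteq> \<one>\<^bsub>G\<^esub>" using assms(4) x \<open>n > 0\<close> by (simp add: torsion_free_def)
  then show "u [^]\<^bsub>H\<^esub> n \<noteq> \<one>\<^bsub>H\<^esub>"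
    using x bij by (auto simp: bij_betw_def inj_on_def simp flip: e.hom_nat_pow e.hom_one)
qed

lemma fin_gen_iso:
  assumes "group G" "group H" "e \<in> iso G H" "fin_gen G"
  shows "fin_gen H"
proof -
  interpret e: group_hom G H e
    using assms by (simp add: group_hom_def group_hom_axioms_def iso_def)
  obtain S where S: "finite S" "S \<subseteq> carrier G" "generate G S = carrier G"
    using assms(4) by (auto simp: fin_gen_def)
  have "generate H (e ` S) = carrier H"
    using S assms(3) by (simp add: e.generate_img iso_def bij_betw_def)
  then show ?thesis unfolding fin_gen_def using S by (intro exI[of _ "e ` S"]) auto
qed

lemma (in group) torsion_free_subgroup_generated:
  "torsion_free G \<Longrightarrow> torsion_free (subgroup_generated G S)"
  using carrier_subgroup_generated_subset
  by (auto simp: torsion_free_def pow_subgroup_generated)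

lemma (in group) fin_gen_subgroup_generated:
  "finite S \<Longrightarrow> fin_gen (subgroup_generated G S)"
  unfolding fin_gen_def
  by (rule exI[of _ "carrier (subgroup_generated G S) \<inter> S"])
     (metis Int_lower1 finite_Int subgroup_generated2 carrier_subgroup_generated)

lemma (in monoid) foldr_mult_closed:
  "set xs \<subseteq> carrier G \<Longrightarrow> foldr (\<otimes>) xs \<one> \<in> carrier G"
  by (induction xs) auto

lemma (in monoid) foldr_mult_eq:
  "set xs \<subseteq> carrier G \<Longrightarrow> b \<in> carrier G \<Longrightarrow> foldr (\<otimes>) xs b = foldr (\<otimes>) xs \<one> \<otimes> b"
  by (induction xs) (simp_all add: m_assoc foldr_mult_closed)

lemma (in group) generate_subset_products:
  assumes "S \<subseteq> carrier G"
  shows "generate G S \<subseteq> (\<lambda>xs. foldr (\<otimes>) xs \<one>) ` lists (S \<union> m_inv G ` S)"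
proof
  fix x assume "x \<in> generate G S"
  then show "x \<in> (\<lambda>xs. foldr (\<otimes>) xs \<one>) ` lists (S \<union> m_inv G ` S)"
  proof (induction rule: generate.induct)
    case one
    show ?case by (rule image_eqI[of _ _ "[]"]) auto
  next
    case (incl h)
    then show ?case using assms by (intro image_eqI[of _ _ "[h]"]) auto
  next
    case (inv h)
    then show ?case using assms by (intro image_eqI[of _ _ "[inv h]"]) auto
  next
    case (eng h1 h2)
    then obtain xs ys where lists: "xs \<in> lists (S \<union> m_inv G ` S)" "ys \<in> lists (S \<union> m_inv G ` S)"
      and "h1 = foldr (\<otimes>) xs \<one>" "h2 = foldr (\<otimes>) ys \<one>"
      by blast
    moreover have "set xs \<subseteq> carrier G" "set ys \<subseteq> carrier G"
      using lists assms by (auto simp: lists_eq_set)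
    ultimately have "h1 \<otimes> h2 = foldr (\<otimes>) (xs @ ys) \<one>"
      using foldr_mult_eq[of xs "foldr (\<otimes>) ys \<one>"] by (simp add: foldr_mult_closed)
    then show ?case using lists by (intro image_eqI[of _ _ "xs @ ys"]) auto
  qed
qed

lemma (in group) countable_generate:
  "countable S \<Longrightarrow> S \<subseteq> carrier G \<Longrightarrow> countable (generate G S)"
  by (blast intro: countable_subset[OF generate_subset_products])

lemma (in group) iso_nat_monoid:
  assumes "countable (carrier G)"
  shows "\<exists>(\<Gamma> :: nat monoid) e. group \<Gamma> \<and> e \<in> iso G \<Gamma>"
proof -
  define e where "e = to_nat_on (carrier G)"
  define \<Gamma> :: "nat monoid" where "\<Gamma> = \<lparr>carrier = e ` carrier G,
    monoid.mult = (\<lambda>u v. e (inv_into (carrier G) e u \<otimes> inv_into (carrier G) e v)), one = e \<one>\<rparr>"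
  have "inj_on e (carrier G)" unfolding e_def using assms by (rule inj_on_to_nat_on)
  then have iso: "e \<in> iso G \<Gamma>" by (auto simp: iso_def hom_def bij_betw_def \<Gamma>_def)
  then have "group (\<Gamma>\<lparr>one := e \<one>\<rparr>)" by (rule iso_imp_img_group)
  then show ?thesis using iso by (auto simp: \<Gamma>_def)
qed

lemma (in group) subgroup_generated_nat_monoid_copy:
  assumes "finite T" "T \<subseteq> carrier G" "torsion_free G"
  shows "\<exists>(\<Gamma> :: nat monoid) e. group \<Gamma> \<and> fin_gen \<Gamma> \<and> torsion_free \<Gamma> \<and> e \<in> iso (subgroup_generated G T) \<Gamma>"
proof -
  interpret K: group "subgroup_generated G T" by simp
  have "countable (carrier (subgroup_generated G T))"
    using assms countable_generate by (simp add: carrier_subgroup_generated Int_absorb1 countable_finite)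
  then obtain \<Gamma> :: "nat monoid" and e where \<Gamma>: "group \<Gamma>" and e: "e \<in> iso (subgroup_generated G T) \<Gamma>"
    using K.iso_nat_monoid by blast
  moreover have "torsion_free \<Gamma>"
    using torsion_free_iso[OF K.is_group \<Gamma> e] torsion_free_subgroup_generated assms(3) by blast
  moreover have "fin_gen \<Gamma>"
    using fin_gen_iso[OF K.is_group \<Gamma> e] fin_gen_subgroup_generated assms(1) by blast
  ultimately show ?thesis by blast
qed

section \<open>Unrestricted wreath products with \<open>\<int>\<close>\<close>

text \<open>The unrestricted permutational wreath product of \<open>\<int>\<close> by a group \<open>G\<close> acting on \<open>Y\<close>, i.e.
  the semidirect product of \<open>\<int>\<^sup>Y\<close> by \<open>G\<close> in which \<open>x\<close> sends \<open>m\<close> to \<open>\<lambda>y. m (act x\<inverse> y)\<close>.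
  Base functions vanish off \<open>Y\<close>, so that each element has a unique representation.\<close>

definition wreath :: "('g, 'c) monoid_scheme \<Rightarrow> 'y set \<Rightarrow> ('g \<Rightarrow> 'y \<Rightarrow> 'y) \<Rightarrow> (('y \<Rightarrow> int) \<times> 'g) monoid"
  where "wreath G Y act =
    \<lparr>carrier = {(m, x). x \<in> carrier G \<and> (\<forall>y. y \<notin> Y \<longrightarrow> m y = 0)},
     monoid.mult = (\<lambda>(m, x) (m', x').
       (\<lambda>y. if y \<in> Y then m y + m' (act (inv\<^bsub>G\<^esub> x) y) else 0, x \<otimes>\<^bsub>G\<^esub> x')),
     one = (\<lambda>y. 0, \<one>\<^bsub>G\<^esub>)\<rparr>"

abbreviation regular_wreath :: "('g, 'c) monoid_scheme \<Rightarrow> (('g \<Rightarrow> int) \<times> 'g) monoid"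
  where "regular_wreath G \<equiv> wreath G (carrier G) (monoid.mult G)"

abbreviation coset_wreath :: "('g, 'c) monoid_scheme \<Rightarrow> (('g set \<Rightarrow> int) \<times> 'g) monoid"
  where "coset_wreath G \<equiv> wreath G {S. S \<subseteq> carrier G} (l_coset G)"

definition wr_top :: "'g \<Rightarrow> ('y \<Rightarrow> int) \<times> 'g"
  where "wr_top x = (\<lambda>y. 0, x)"

lemma inj_wr_top: "inj wr_top"
  by (rule injI) (simp add: wr_top_def)

locale left_action = group +
  fixes Y :: "'y set" and act :: "'a \<Rightarrow> 'y \<Rightarrow> 'y"
  assumes act_closed: "x \<in> carrier G \<Longrightarrow> y \<in> Y \<Longrightarrow> act x y \<in> Y"
    and act_one: "y \<in> Y \<Longrightarrow> act \<one> y = y"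
    and act_mult: "x \<in> carrier G \<Longrightarrow> z \<in> carrier G \<Longrightarrow> y \<in> Y \<Longrightarrow> act (x \<otimes> z) y = act x (act z y)"
begin

abbreviation (input) W where "W \<equiv> wreath G Y act"

lemma wreath_carrier: "(m, x) \<in> carrier W \<longleftrightarrow> x \<in> carrier G \<and> (\<forall>y. y \<notin> Y \<longrightarrow> m y = 0)"
  by (simp add: wreath_def)

lemma wreath_mult:
  "(m, x) \<otimes>\<^bsub>W\<^esub> (m', x') = (\<lambda>y. if y \<in> Y then m y + m' (act (inv x) y) else 0, x \<otimes> x')"
  by (simp add: wreath_def)

lemma wreath_one: "\<one>\<^bsub>W\<^esub> = (\<lambda>y. 0, \<one>)"
  by (simp add: wreath_def)

lemma wreath_inverse:
  assumes "(m, x) \<in> carrier W"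
  defines "m' \<equiv> \<lambda>y. if y \<in> Y then - m (act x y) else 0"
  shows "(m', inv x) \<in> carrier W" "(m', inv x) \<otimes>\<^bsub>W\<^esub> (m, x) = \<one>\<^bsub>W\<^esub>"
  using assms act_closed by (simp_all add: wreath_carrier wreath_mult wreath_one fun_eq_iff)

lemma group_wreath: "group W"
proof (rule groupI)
  fix p q assume "p \<in> carrier W" "q \<in> carrier W"
  then show "p \<otimes>\<^bsub>W\<^esub> q \<in> carrier W"
    by (cases p; cases q) (simp add: wreath_carrier wreath_mult)
next
  fix p q r assume "p \<in> carrier W" "q \<in> carrier W" "r \<in> carrier W"
  moreover have "act (inv (x \<otimes> x')) y = act (inv x') (act (inv x) y)"
    if "x \<in> carrier G" "x' \<in> carrier G" "y \<in> Y" for x x' y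
    using that by (simp add: inv_mult_group act_mult)
  ultimately show "p \<otimes>\<^bsub>W\<^esub> q \<otimes>\<^bsub>W\<^esub> r = p \<otimes>\<^bsub>W\<^esub> (q \<otimes>\<^bsub>W\<^esub> r)"
    using act_closed
    by (cases p; cases q; cases r) (simp add: wreath_carrier wreath_mult m_assoc fun_eq_iff)
next
  fix p assume "p \<in> carrier W"
  then show "\<one>\<^bsub>W\<^esub> \<otimes>\<^bsub>W\<^esub> p = p"
    by (cases p) (simp add: wreath_carrier wreath_mult wreath_one act_one fun_eq_iff)
  show "\<exists>q\<in>carrier W. q \<otimes>\<^bsub>W\<^esub> p = \<one>\<^bsub>W\<^esub>"
    using \<open>p \<in> carrier W\<close> wreath_inverse by (cases p) blast
qed (simp add: wreath_one wreath_carrier)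

lemma wreath_inv:
  assumes "(m, x) \<in> carrier W"
  shows "inv\<^bsub>W\<^esub> (m, x) = (\<lambda>y. if y \<in> Y then - m (act x y) else 0, inv x)"
  using group.inv_equality[OF group_wreath wreath_inverse(2)[OF assms] assms wreath_inverse(1)[OF assms]] .

lemma wreath_base_pow:
  "(m, \<one>) \<in> carrier W \<Longrightarrow> (m, \<one>) [^]\<^bsub>W\<^esub> (n::nat) = (\<lambda>y. int n * m y, \<one>)"
  by (induction n) (simp_all add: wreath_mult wreath_one wreath_carrier act_one algebra_simps fun_eq_iff)

lemma wreath_pow_snd: "p \<in> carrier W \<Longrightarrow> snd (p [^]\<^bsub>W\<^esub> (n::nat)) = snd p [^] n"
proof (induction n)
  case (Suc n)
  then show ?case
    by (cases p; cases "p [^]\<^bsub>W\<^esub> n") (simp add: wreath_mult)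
qed (simp add: wreath_one)

lemma torsion_free_wreath:
  assumes "torsion_free G"
  shows "torsion_free W"
  unfolding torsion_free_def
proof (intro ballI impI allI)
  fix p and n :: nat assume p: "p \<in> carrier W" "p \<noteq> \<one>\<^bsub>W\<^esub>" and "n > 0"
  obtain m x where p_eq: "p = (m, x)" by (cases p)
  show "p [^]\<^bsub>W\<^esub> n \<noteq> \<one>\<^bsub>W\<^esub>"
  proof (cases "x = \<one>")
    case True
    then obtain y where "m y \<noteq> 0" using p p_eq by (auto simp: wreath_one)
    then show ?thesis using p p_eq True \<open>n > 0\<close> by (simp add: wreath_base_pow wreath_one fun_eq_iff)
  next
    case False
    then have "x [^] n \<noteq> \<one>"
      using assms p p_eq \<open>n > 0\<close> by (simp add: torsion_free_def wreath_carrier)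
    then show ?thesis using wreath_pow_snd[OF p(1), of n] p_eq by (auto simp: wreath_one)
  qed
qed

lemma wr_top_carrier [simp]: "x \<in> carrier G \<Longrightarrow> wr_top x \<in> carrier W"
  by (simp add: wr_top_def wreath_carrier)

lemma wr_top_mult: "x \<in> carrier G \<Longrightarrow> y \<in> carrier G \<Longrightarrow> wr_top x \<otimes>\<^bsub>W\<^esub> wr_top y = wr_top (x \<otimes> y)"
  by (simp add: wr_top_def wreath_mult fun_eq_iff)

lemma group_hom_wr_top: "group_hom G W wr_top"
  by (intro group_hom.intro group_hom_axioms.intro is_group group_wreath homI)
     (simp_all add: wr_top_mult)

lemma wr_top_comm:
  "x \<in> carrier G \<Longrightarrow> y \<in> carrier G \<Longrightarrow> comm W (wr_top x) (wr_top y) = wr_top (comm G x y)"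
  by (simp add: group_hom.hom_comm[OF group_hom_wr_top])

lemma wreath_base_mult:
  "x \<in> carrier G \<Longrightarrow> (n, \<one>) \<otimes>\<^bsub>W\<^esub> (m, x) = (\<lambda>y. if y \<in> Y then n y + m y else 0, x)"
  by (simp add: wreath_mult act_one fun_eq_iff)

lemma comm_base_wr_top:
  assumes "(m, \<one>) \<in> carrier W" "x \<in> carrier G"
  shows "comm W (m, \<one>) (wr_top x) = (\<lambda>y. if y \<in> Y then m (act x y) - m y else 0, \<one>)"
  using assms act_closed
  by (simp add: comm_def wreath_inv wr_top_def wreath_mult wreath_carrier act_one fun_eq_iff)

lemma base_commute_wr_top:
  assumes "(m, \<one>) \<in> carrier W" "x \<in> carrier G" "\<And>y. y \<in> Y \<Longrightarrow> m (act (inv x) y) = m y"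
  shows "(m, \<one>) \<otimes>\<^bsub>W\<^esub> wr_top x = wr_top x \<otimes>\<^bsub>W\<^esub> (m, \<one>)"
  using assms by (simp add: wreath_mult wreath_carrier wr_top_def fun_eq_iff)

end

lemma (in group) left_action_regular: "left_action G (carrier G) (\<otimes>)"
  by unfold_locales (auto simp: m_assoc)

lemma (in group) left_action_l_coset: "left_action G {S. S \<subseteq> carrier G} (l_coset G)"
  by unfold_locales (auto simp: l_coset_subset_G lcos_mult_one lcos_m_assoc)

lemma (in group) l_coset_eq_subgroup_iff:
  assumes H: "subgroup H G" and u: "u \<in> H" and S: "S \<subseteq> carrier G"
  shows "u <# S = H \<longleftrightarrow> S = H"
proof -
  have u_carrier: "u \<in> carrier G" using H u by (rule subgroup.mem_carrier)
  have uH: "u <# H = H" using coset_join3[OF u_carrier H u] .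
  have "inv u <# H = H"
    using coset_join3[OF inv_closed[OF u_carrier] H subgroup.m_inv_closed[OF H u]] .
  moreover have "inv u <# (u <# S) = S"
    using S u_carrier by (simp add: lcos_m_assoc lcos_mult_one)
  ultimately show ?thesis using uH by metis
qed

lemma (in group) coset_wreath_indicator:
  assumes H: "subgroup H G"
  defines "W \<equiv> coset_wreath G"
    and "\<delta> \<equiv> (\<lambda>S. of_bool (S = H), \<one>)"
  shows "\<delta> \<in> carrier W" and "\<delta> \<noteq> \<one>\<^bsub>W\<^esub>"
    and "u \<in> H \<Longrightarrow> \<delta> \<otimes>\<^bsub>W\<^esub> wr_top u = wr_top u \<otimes>\<^bsub>W\<^esub> \<delta>"
    and "x \<in> carrier G \<Longrightarrow> x \<notin> H \<Longrightarrow> \<exists>\<nu>. comm W \<delta> (wr_top x) = (\<nu>, \<one>) \<and> \<nu> H = -1"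
proof -
  interpret W: left_action G "{S. S \<subseteq> carrier G}" "l_coset G" by (rule left_action_l_coset)
  have H_sub: "H \<subseteq> carrier G" using H by (rule subgroup.subset)
  show \<delta>: "\<delta> \<in> carrier W" using H_sub by (auto simp: \<delta>_def W_def W.wreath_carrier)
  show "\<delta> \<noteq> \<one>\<^bsub>W\<^esub>" by (simp add: \<delta>_def W_def W.wreath_one fun_eq_iff)
  show "\<delta> \<otimes>\<^bsub>W\<^esub> wr_top u = wr_top u \<otimes>\<^bsub>W\<^esub> \<delta>" if u: "u \<in> H"
    unfolding W_def \<delta>_def
  proof (rule W.base_commute_wr_top)
    show "(\<lambda>S. of_bool (S = H), \<one>) \<in> carrier (coset_wreath G)"
      using \<delta> by (simp add: \<delta>_def W_def)
    show "u \<in> carrier G" using H u by (rule subgroup.mem_carrier)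
    show "of_bool (inv u <# S = H) = of_bool (S = H)" if "S \<in> {S. S \<subseteq> carrier G}" for S
      using that l_coset_eq_subgroup_iff[OF H subgroup.m_inv_closed[OF H u]] by simp
  qed
  show "\<exists>\<nu>. comm W \<delta> (wr_top x) = (\<nu>, \<one>) \<and> \<nu> H = -1" if x: "x \<in> carrier G" "x \<notin> H"
  proof (intro exI conjI)
    show "comm W \<delta> (wr_top x) = (\<lambda>S. if S \<subseteq> carrier G then of_bool (x <# S = H) - of_bool (S = H) else 0, \<one>)"
      using W.comm_base_wr_top[of "\<lambda>S. of_bool (S = H)" x] \<delta> x by (simp add: W_def \<delta>_def)
    have "x <# H \<noteq> H" using x lcos_self[OF x(1) H] by auto
    then show "(if H \<subseteq> carrier G then of_bool (x <# H = H) - of_bool (H = H) else 0) = (-1 :: int)"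
      using H_sub by simp
  qed
qed

context left_action
begin

lemma const_base_commute_wr_top:
  fixes c :: int
  assumes "x \<in> carrier G"
  defines "c' \<equiv> (\<lambda>y. if y \<in> Y then c else 0, \<one>)"
  shows "c' \<otimes>\<^bsub>W\<^esub> wr_top x = wr_top x \<otimes>\<^bsub>W\<^esub> c'"
  unfolding c'_def using assms act_closed by (intro base_commute_wr_top) (simp_all add: wreath_carrier)

text \<open>The commutator in the last claim is constant because left multiplication by the base
  element \<open>(\<nu>, 1)\<close> of \<open>W\<close> adds \<open>\<nu>\<close> to every base coordinate.\<close>

lemma regular_wreath_evaluation:
  assumes y0: "y0 \<in> Y"
  defines "W' \<equiv> regular_wreath W"
    and "ev \<equiv> (\<lambda>p. if p \<in> carrier W then fst p y0 else 0, \<one>\<^bsub>W\<^esub>)"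
  shows "ev \<in> carrier W'" and "ev \<noteq> \<one>\<^bsub>W'\<^esub>"
    and "u \<in> carrier G \<Longrightarrow> act u y0 = y0 \<Longrightarrow> ev \<otimes>\<^bsub>W'\<^esub> wr_top (wr_top u) = wr_top (wr_top u) \<otimes>\<^bsub>W'\<^esub> ev"
    and "(\<nu>, \<one>) \<in> carrier W \<Longrightarrow>
         comm W' ev (wr_top (\<nu>, \<one>)) = (\<lambda>p. if p \<in> carrier W then \<nu> y0 else 0, \<one>\<^bsub>W\<^esub>)"
proof -
  interpret W: group W by (rule group_wreath)
  interpret W': left_action W "carrier W" "monoid.mult W" by (rule W.left_action_regular)
  show ev: "ev \<in> carrier W'" by (simp add: ev_def W'_def W'.wreath_carrier)
  have "(\<lambda>y. of_bool (y = y0), \<one>) \<in> carrier W" using y0 by (auto simp: wreath_carrier)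
  then have "fst ev (\<lambda>y. of_bool (y = y0), \<one>) = 1" by (simp add: ev_def)
  then show "ev \<noteq> \<one>\<^bsub>W'\<^esub>" by (auto simp: W'_def W'.wreath_one)
  show "ev \<otimes>\<^bsub>W'\<^esub> wr_top (wr_top u) = wr_top (wr_top u) \<otimes>\<^bsub>W'\<^esub> ev"
    if u: "u \<in> carrier G" "act u y0 = y0"
  proof -
    have "fst (inv\<^bsub>W\<^esub> (wr_top u) \<otimes>\<^bsub>W\<^esub> p) y0 = fst p y0" if "p \<in> carrier W" for p
      using that u y0 by (cases p) (simp add: wr_top_def wreath_carrier wreath_inv wreath_mult)
    then show ?thesis
      unfolding W'_def ev_def using u ev
      by (intro W'.base_commute_wr_top) (simp_all add: W'_def ev_def)
  qed
  show "comm W' ev (wr_top (\<nu>, \<one>)) = (\<lambda>p. if p \<in> carrier W then \<nu> y0 else 0, \<one>\<^bsub>W\<^esub>)"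
    if \<nu>: "(\<nu>, \<one>) \<in> carrier W"
  proof -
    have "comm W' ev (wr_top (\<nu>, \<one>))
        = (\<lambda>p. if p \<in> carrier W then fst ev ((\<nu>, \<one>) \<otimes>\<^bsub>W\<^esub> p) - fst ev p else 0, \<one>\<^bsub>W\<^esub>)"
      using W'.comm_base_wr_top[of "fst ev" "(\<nu>, \<one>)"] ev \<nu> by (simp add: W'_def ev_def)
    also have "\<dots> = (\<lambda>p. if p \<in> carrier W then \<nu> y0 else 0, \<one>\<^bsub>W\<^esub>)"
    proof -
      have "fst ev ((\<nu>, \<one>) \<otimes>\<^bsub>W\<^esub> p) - fst ev p = \<nu> y0" if "p \<in> carrier W" for p
        using that \<nu> y0 by (cases p) (simp add: ev_def wreath_base_mult wreath_carrier)
      then show ?thesis by (simp add: fun_eq_iff)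
    qed
    finally show ?thesis .
  qed
qed

end

type_synonym 'a double_wreath = "((('a set \<Rightarrow> int) \<times> 'a) \<Rightarrow> int) \<times> ('a set \<Rightarrow> int) \<times> 'a"

lemma (in group) double_wreath_centralizing_pair:
  assumes g: "g \<in> carrier G" and h: "h \<in> carrier G" "h \<notin> generate G {g}"
  defines "a \<equiv> (\<lambda>p. if p \<in> carrier (coset_wreath G) then fst p (generate G {g}) else 0,
                  \<one>\<^bsub>coset_wreath G\<^esub>)"
    and "b \<equiv> wr_top (\<lambda>S. of_bool (S = generate G {g}) :: int, \<one>)"
  shows "centralizing_pair (regular_wreath (coset_wreath G)) (wr_top (wr_top g)) (wr_top (wr_top h)) a b"
proof -
  let ?W1 = "coset_wreath G"
  interpret W1: left_action G "{S. S \<subseteq> carrier G}" "l_coset G" by (rule left_action_l_coset)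
  interpret W1: group ?W1 by (rule W1.group_wreath)
  let ?W2 = "regular_wreath ?W1"
  interpret W2: left_action ?W1 "carrier ?W1" "monoid.mult ?W1" by (rule W1.left_action_regular)
  let ?H = "generate G {g}"
  have H: "subgroup ?H G" "g \<in> ?H" "?H \<in> {S. S \<subseteq> carrier G}"
    using g generate.incl[of g "{g}" G] generate_incl[of "{g}"] by (auto simp: generate_is_subgroup)
  define \<delta> where "\<delta> = (\<lambda>S. of_bool (S = ?H) :: int, \<one>)"
  note \<delta> = coset_wreath_indicator[OF H(1), folded \<delta>_def]
  obtain \<nu> where \<nu>: "comm ?W1 \<delta> (wr_top h) = (\<nu>, \<one>)" "\<nu> ?H = -1"
    using \<delta>(4) h by auto
  note a = W1.regular_wreath_evaluation[OF H(3), folded a_def]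
  have "comm ?W2 a (comm ?W2 b (wr_top (wr_top h))) = comm ?W2 a (wr_top (\<nu>, \<one>))"
    using \<delta>(1) h by (simp add: b_def W2.wr_top_comm \<nu> flip: \<delta>_def)
  also have "\<dots> = (\<lambda>p. if p \<in> carrier ?W1 then -1 else 0, \<one>\<^bsub>?W1\<^esub>)"
    using a(4) W1.comm_closed[OF \<delta>(1) W1.wr_top_carrier[OF h(1)]] \<nu>
    by (simp add: fun_eq_iff)
  finally have comm: "comm ?W2 a (comm ?W2 b (wr_top (wr_top h)))
      = (\<lambda>p. if p \<in> carrier ?W1 then -1 else 0, \<one>\<^bsub>?W1\<^esub>)" .
  show ?thesis
    unfolding centralizing_pair_def comm
  proof (intro conjI)
    show "a \<in> carrier ?W2" "a \<noteq> \<one>\<^bsub>?W2\<^esub>" using a(1,2) .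
    show "b \<in> carrier ?W2" using \<delta>(1) by (simp add: b_def flip: \<delta>_def)
    show "b \<noteq> \<one>\<^bsub>?W2\<^esub>" "a \<noteq> b"
      using \<delta>(2) by (auto simp: a_def b_def wr_top_def W2.wreath_one simp flip: \<delta>_def)
    show "a \<otimes>\<^bsub>?W2\<^esub> wr_top (wr_top g) = wr_top (wr_top g) \<otimes>\<^bsub>?W2\<^esub> a"
      using a(3) g H by (simp add: coset_join3)
    show "b \<otimes>\<^bsub>?W2\<^esub> wr_top (wr_top g) = wr_top (wr_top g) \<otimes>\<^bsub>?W2\<^esub> b"
      using \<delta>(1,3) g H by (simp add: b_def W2.wr_top_mult flip: \<delta>_def)
    show "(\<lambda>p. if p \<in> carrier ?W1 then -1 else 0, \<one>\<^bsub>?W1\<^esub>) \<noteq> \<one>\<^bsub>?W2\<^esub>"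
      using W1.one_closed by (auto simp: W2.wreath_one W1.wreath_one fun_eq_iff)
    show "(\<lambda>p. if p \<in> carrier ?W1 then -1 else 0, \<one>\<^bsub>?W1\<^esub>) \<otimes>\<^bsub>?W2\<^esub> wr_top (wr_top g)
        = wr_top (wr_top g) \<otimes>\<^bsub>?W2\<^esub> (\<lambda>p. if p \<in> carrier ?W1 then -1 else 0, \<one>\<^bsub>?W1\<^esub>)"
      using g by (simp add: W2.const_base_commute_wr_top)
  qed
qed

lemma (in group) torsion_free_double_wreath_centralizing_pair:
  assumes "torsion_free G" "g \<in> carrier G" "h \<in> carrier G" "h \<notin> generate G {g}"
  shows "\<exists>(W :: 'a double_wreath monoid) \<iota> a b.
           group W \<and> torsion_free W \<and> \<iota> \<in> hom G W \<and> inj \<iota> \<and> centralizing_pair W (\<iota> g) (\<iota> h) a b"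
proof -
  let ?W1 = "coset_wreath G"
  interpret W1: left_action G "{S. S \<subseteq> carrier G}" "l_coset G" by (rule left_action_l_coset)
  interpret W2: left_action ?W1 "carrier ?W1" "monoid.mult ?W1"
    by (rule group.left_action_regular[OF W1.group_wreath])
  let ?W2 = "regular_wreath ?W1"
  have "wr_top \<circ> wr_top \<in> hom G ?W2"
    using Group.hom_compose[OF group_hom.homh[OF W1.group_hom_wr_top] group_hom.homh[OF W2.group_hom_wr_top]] .
  moreover obtain a b where "centralizing_pair ?W2 (wr_top (wr_top g)) (wr_top (wr_top h)) a b"
    using double_wreath_centralizing_pair[OF assms(2-4)] by blast
  then have "centralizing_pair ?W2 ((wr_top \<circ> wr_top) g) ((wr_top \<circ> wr_top) h) a b" by simp
  ultimately show ?thesis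
    using W2.group_wreath W2.torsion_free_wreath[OF W1.torsion_free_wreath[OF assms(1)]]
      inj_compose[OF inj_wr_top inj_wr_top]
    by blast
qed

lemma fin_gen_nat_monoid_centralizing_pair:
  fixes L :: "('a, 'c) monoid_scheme" and W :: "('w, 'd) monoid_scheme"
  assumes L: "group L" and W: "group W" "torsion_free W"
    and \<iota>: "\<iota> \<in> hom L W" "inj_on \<iota> (carrier L)"
    and gh: "g \<in> carrier L" "h \<in> carrier L"
    and pair: "centralizing_pair W (\<iota> g) (\<iota> h) a b"
  shows "\<exists>(\<Gamma> :: nat monoid) \<phi>. group \<Gamma> \<and> fin_gen \<Gamma> \<and> torsion_free \<Gamma>
           \<and> \<phi> \<in> hom (L\<lparr>carrier := generate L {g, h}\<rparr>) \<Gamma> \<and> inj_on \<phi> (generate L {g, h})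
           \<and> (\<exists>a b. centralizing_pair \<Gamma> (\<phi> g) (\<phi> h) a b)"
proof -
  interpret L: group L by (rule L)
  interpret W: group W by (rule W)
  interpret \<iota>: group_hom L W \<iota> by unfold_locales (rule \<iota>(1))
  define T where "T = {\<iota> g, \<iota> h, a, b}"
  define K where "K = subgroup_generated W T"
  interpret K: group K by (simp add: K_def)
  have T: "finite T" "T \<subseteq> carrier W"
    using pair gh by (auto simp: T_def centralizing_pair_def)
  then have T_K: "T \<subseteq> carrier K"
    by (simp add: K_def W.subgroup_generated_subset_carrier_subset)
  obtain \<Gamma> :: "nat monoid" and e where \<Gamma>: "group \<Gamma>" "fin_gen \<Gamma>" "torsion_free \<Gamma>" and e: "e \<in> iso K \<Gamma>"
    using W.subgroup_generated_nat_monoid_copy[OF T W(2)] by (auto simp: K_def)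
  interpret e: group_hom K \<Gamma> e
    using e \<Gamma> K.is_group by (simp add: group_hom_def group_hom_axioms_def iso_def)
  have e_inj: "inj_on e (carrier K)" using e by (simp add: iso_def bij_betw_def)
  have gen_sub: "generate L {g, h} \<subseteq> carrier L" using gh by (intro L.generate_incl) auto
  have "\<iota> ` generate L {g, h} = generate W {\<iota> g, \<iota> h}" using gh \<iota>.generate_img[of "{g, h}"] by simp
  also have "\<dots> \<subseteq> carrier K"
    using T by (simp add: K_def carrier_subgroup_generated Int_absorb1 W.mono_generate T_def)
  finally have \<iota>_K: "\<iota> ` generate L {g, h} \<subseteq> carrier K" .
  have "\<iota> \<in> hom (L\<lparr>carrier := generate L {g, h}\<rparr>) K"
    using \<iota>_K gen_sub by (auto simp: hom_def K_def subset_iff)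
  then have hom: "e \<circ> \<iota> \<in> hom (L\<lparr>carrier := generate L {g, h}\<rparr>) \<Gamma>"
    using Group.hom_compose e.homh by blast
  have inj: "inj_on (e \<circ> \<iota>) (generate L {g, h})"
    using \<iota>(2) e_inj \<iota>_K gen_sub by (blast intro: comp_inj_on inj_on_subset)
  interpret incl: group_hom K W id
    using W.carrier_subgroup_generated_subset by unfold_locales (auto simp: hom_def K_def subset_iff)
  have "centralizing_pair K (\<iota> g) (\<iota> h) a b"
    using incl.centralizing_pair_image_iff[of "\<iota> g" "\<iota> h" a b] pair T_K by (simp add: T_def)
  then have "centralizing_pair \<Gamma> ((e \<circ> \<iota>) g) ((e \<circ> \<iota>) h) (e a) (e b)"
    using e.centralizing_pair_image_iff e_inj T_K by (simp add: T_def)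
  then show ?thesis using \<Gamma> hom inj by blast
qed

theorem lemma3p1:
  fixes L :: "('a, 'c) monoid_scheme" and f g h :: 'a
  assumes grp: "group L"
    and tf: "torsion_free L"
    and fgh: "f \<in> carrier L" "g \<in> carrier L" "h \<in> carrier L"
    and gen: "generate L {f, g, h} = carrier L"
    and fh: "comm L f h \<noteq> \<one>\<^bsub>L\<^esub>"
    and fg: "comm L f g = \<one>\<^bsub>L\<^esub>"
    and Gnt: "generate L {g, h} \<noteq> {\<one>\<^bsub>L\<^esub>}"
    and g1: "g \<noteq> \<one>\<^bsub>L\<^esub>" and h1: "h \<noteq> \<one>\<^bsub>L\<^esub>"
    and cyc: "is_cyclic (L\<lparr>carrier := generate L {g, h}\<rparr>) \<Longrightarrow>
              \<exists>n::int. \<bar>n\<bar> > 1 \<and> g = h [^]\<^bsub>L\<^esub> n"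
  shows "\<exists>(\<Gamma> :: nat monoid) \<phi>. group \<Gamma> \<and> fin_gen \<Gamma> \<and> torsion_free \<Gamma>
           \<and> \<phi> \<in> hom (L\<lparr>carrier := generate L {g, h}\<rparr>) \<Gamma>
           \<and> inj_on \<phi> (generate L {g, h})
           \<and> (\<exists>a\<in>carrier \<Gamma>. \<exists>b\<in>carrier \<Gamma>.
                 a \<noteq> \<one>\<^bsub>\<Gamma>\<^esub> \<and> b \<noteq> \<one>\<^bsub>\<Gamma>\<^esub> \<and> a \<noteq> b
               \<and> a \<otimes>\<^bsub>\<Gamma>\<^esub> \<phi> g = \<phi> g \<otimes>\<^bsub>\<Gamma>\<^esub> a
               \<and> b \<otimes>\<^bsub>\<Gamma>\<^esub> \<phi> g = \<phi> g \<otimes>\<^bsub>\<Gamma>\<^esub> b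
               \<and> comm \<Gamma> a (comm \<Gamma> b (\<phi> h)) \<noteq> \<one>\<^bsub>\<Gamma>\<^esub>
               \<and> comm \<Gamma> a (comm \<Gamma> b (\<phi> h)) \<otimes>\<^bsub>\<Gamma>\<^esub> \<phi> g
                   = \<phi> g \<otimes>\<^bsub>\<Gamma>\<^esub> comm \<Gamma> a (comm \<Gamma> b (\<phi> h)))"
proof -
  interpret L: group L by (rule grp)
  have "h \<notin> generate L {g}"
  proof
    assume h_in: "h \<in> generate L {g}"
    then obtain n :: int where "\<bar>n\<bar> > 1" "g = h [^]\<^bsub>L\<^esub> n"
      using cyc L.is_cyclic_generate_pair fgh(2) by blast
    then show False using h_in L.not_in_generate_power tf fgh(3) h1 by blast
  qed
  then obtain W :: "'a double_wreath monoid" and \<iota> a b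
    where W: "group W" "torsion_free W" and \<iota>: "\<iota> \<in> hom L W" "inj \<iota>"
      and pair: "centralizing_pair W (\<iota> g) (\<iota> h) a b"
    using L.torsion_free_double_wreath_centralizing_pair tf fgh(2,3) by blast
  obtain \<Gamma> :: "nat monoid" and \<phi> a' b' where "group \<Gamma>" "fin_gen \<Gamma>" "torsion_free \<Gamma>"
      "\<phi> \<in> hom (L\<lparr>carrier := generate L {g, h}\<rparr>) \<Gamma>" "inj_on \<phi> (generate L {g, h})"
      "centralizing_pair \<Gamma> (\<phi> g) (\<phi> h) a' b'"
    using fin_gen_nat_monoid_centralizing_pair[OF grp W \<iota>(1) inj_on_subset[OF \<iota>(2)] fgh(2,3) pair]
    by blast
  then show ?thesis unfolding centralizing_pair_def by blast
qed

end
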